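(* Let $L/K$ be a finite totally ramified separable extension of degree $n>1$ with $\nu=v_p(n)$, let $\pi_K,\pi_L$ be uniformizers of $K,L$, and let $\hat{\mathcal{F}}(X)=\sum_{h\ge0}a_hX^{h+n}$ (with $a_h\in R$) be the unique series with $\hat{\mathcal{F}}(\pi_L)=\pi_K$. Then for every $0\le j\le\nu$ and every real $x\ge0$, \[ \phi_{L/K}^j(x)=\min\left\{h+v_L\left(\binom{h+n}{p^{j_0}}\right)+p^{j_0}x:\ 0\le j_0\le j,\ h\ge0,\ a_h\neq0\right\}. \]
   Context: Let $p$ be a prime and $K$ a field complete with respect to a discrete valuation whose residue field $\overline{K}$ is perfect of characteristic $p$ (the characteristic of $K$ may be $0$ or $p$). Fix a separable closure $K^{sep}$; $v_K$ is the valuation on $K^{sep}$ with $v_K(K^\times)=\mathbb{Z}$, and $R\subset\mathcal{O}_K$ is the set of Teichmüller representatives of $\overline{K}$. $v_p$ denotes the $p$-adic valuation on $\mathbb{Z}$. $L/K$ is a finite totally ramified subextension of $K^{sep}/K$; $v_L$ is the valuation on $K^{sep}$ with $v_L(L^\times)=\mathbb{Z}$ (so $v_L(0)=\infty$, and $v_L(p)=\infty$ if $\operatorname{char}K=p$). For $0\le j\le\nu$ put $\tilde{\imath}_j=\min\{h\ge0: v_p(h+n)\le j,\ a_h\ne0\}$ (or $\infty$ if no such $h$). The indices of inseparability are defined recursively by $i_\nu=0$ and $i_j=\min\{\tilde{\imath}_j,\,i_{j+1}+v_L(p)\}$ for $j=\nu-1,\dots,0$. For $x\in[0,\infty)$ define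 $\tilde{\phi}_{L/K}^j(x)=i_j+p^jx$ and $\phi_{L/K}^j(x)=\min\{\tilde{\phi}_{L/K}^{j_0}(x):0\le j_0\le j\}$. *)

theory Defs
  imports "HOL-Computational_Algebra.Primes" "HOL-Library.Extended_Real"
begin

text \<open>Abstract data of the extension L/K entering the statement:
  p prime, n = [L:K], nu = v_p(n), the coefficient sequence a_h of the series
  F(X) = sum_h a_h X^(h+n), and vLp = v_L(p) (infinite in characteristic p,
  equal to n * v_K(p) in characteristic 0).\<close>

text \<open>v_L of (the image in K of) a natural number m:
  v_L(m) = v_p(m) * v_L(p), with v_L(0) = infinity, and 0 * infinity = 0
  (units have valuation 0 also in characteristic p).\<close>
definition vL_nat :: "nat \<Rightarrow> ereal \<Rightarrow> nat \<Rightarrow> ereal" where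
  "vL_nat p vLp m = (if m = 0 then \<infinity> else ereal (real (multiplicity p m)) * vLp)"

definition itilde :: "nat \<Rightarrow> nat \<Rightarrow> (nat \<Rightarrow> 'a::zero) \<Rightarrow> nat \<Rightarrow> ereal" where
  "itilde p n a j = (INF h \<in> {h. multiplicity p (h + n) \<le> j \<and> a h \<noteq> 0}. ereal (real h))"

text \<open>Downward recursion: ind_aux k = i_(nu - k); i_nu = 0,
  i_j = min (tilde i_j) (i_(j+1) + v_L(p)).\<close>
fun ind_aux :: "nat \<Rightarrow> nat \<Rightarrow> (nat \<Rightarrow> 'a::zero) \<Rightarrow> ereal \<Rightarrow> nat \<Rightarrow> ereal" where
  "ind_aux p n a vLp 0 = 0"
| "ind_aux p n a vLp (Suc k) =
     min (itilde p n a (multiplicity p n - Suc k)) (ind_aux p n a vLp k + vLp)"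

definition insep_index :: "nat \<Rightarrow> nat \<Rightarrow> (nat \<Rightarrow> 'a::zero) \<Rightarrow> ereal \<Rightarrow> nat \<Rightarrow> ereal" where
  "insep_index p n a vLp j = ind_aux p n a vLp (multiplicity p n - j)"

definition phi_j :: "nat \<Rightarrow> nat \<Rightarrow> (nat \<Rightarrow> 'a::zero) \<Rightarrow> ereal \<Rightarrow> nat \<Rightarrow> real \<Rightarrow> ereal" where
  "phi_j p n a vLp j x =
     Min ((\<lambda>j0. insep_index p n a vLp j0 + ereal (real (p ^ j0) * x)) ` {..j})"

end

theory Submission
  imports Defs "HOL-Algebra.Exponent"
begin

text \<open>Unrolling the recursion for the indices of inseparability gives
  \<open>i\<^sub>j \<le> \<tilde>i\<^sub>t + (t - j) v\<^sub>L(p)\<close> for \<open>j \<le> t \<le> \<nu>\<close>, with equality for some \<open>t\<close>; hence \<open>i\<^sub>j\<close> is the least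
  value of \<open>h + d v\<^sub>L(p)\<close> over \<open>a\<^sub>h \<noteq> 0\<close> and \<open>v\<^sub>p(h + n) \<le> j + d\<close>.
  By Kummer, \<open>v\<^sub>p(binom (h + n) (p\<^sup>j\<^sup>0)) = v\<^sub>p(h + n) - j\<^sub>0\<close> whenever \<open>j\<^sub>0 \<le> v\<^sub>p(h + n)\<close>, so the
  binomial coefficient contributes exactly the optimal \<open>d v\<^sub>L(p)\<close>, and a term with
  \<open>j\<^sub>0 > v\<^sub>p(h + n)\<close> is dominated by the same term at level \<open>v\<^sub>p(h + n)\<close>.\<close>

lemma multiplicity_choose_prime_power:
  fixes p m k :: nat
  assumes "prime p" and "0 < m" and "k \<le> multiplicity p m"
  shows "multiplicity p (m choose p ^ k) = multiplicity p m - k"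
proof -
  obtain c where m: "m = p ^ k * c"
    using multiplicity_dvd'[OF assms(3)] by (elim dvdE)
  with assms(2) have "0 < c" by simp
  with assms(1) m have "multiplicity p m = k + multiplicity p c"
    by (simp add: prime_elem_multiplicity_mult_distrib)
  then show ?thesis
    using const_p_fac[OF \<open>0 < c\<close> assms(1), of k] m by simp
qed

lemma ereal_zero_times [simp]: "ereal 0 * (v::ereal) = 0"
  by (cases v) auto

lemma vL_nat_nonneg: "0 \<le> vLp \<Longrightarrow> 0 \<le> vL_nat p vLp m"
  unfolding vL_nat_def by simp

lemma vL_nat_choose_prime_power:
  assumes "prime p" and "0 < m" and "k \<le> multiplicity p m"
  shows "vL_nat p vLp (m choose p ^ k) = ereal (real (multiplicity p m - k)) * vLp"
proof -
  have "p ^ k \<le> m"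
    using multiplicity_dvd'[OF assms(3)] assms(2) by (simp add: dvd_imp_le)
  then show ?thesis
    unfolding vL_nat_def using multiplicity_choose_prime_power[OF assms] by simp
qed

lemma vL_nat_choose_prime_power_ge:
  assumes "prime p" and "0 < m" and "0 \<le> vLp"
  shows "ereal (real (multiplicity p m - k)) * vLp \<le> vL_nat p vLp (m choose p ^ k)"
proof (cases "k \<le> multiplicity p m")
  case True
  then show ?thesis
    using vL_nat_choose_prime_power[OF assms(1,2)] by simp
next
  case False
  then show ?thesis
    using vL_nat_nonneg[OF assms(3)] by simp
qed

lemma ereal_of_nat_Suc_mult: "0 \<le> (v::ereal) \<Longrightarrow> ereal (real (Suc d)) * v = ereal (real d) * v + v"
  by (cases v) (auto simp: algebra_simps)

lemma ereal_of_nat_mult_mono: "0 \<le> (v::ereal) \<Longrightarrow> d \<le> d' \<Longrightarrow> ereal (real d) * v \<le> ereal (real d') * v"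
  by (rule ereal_mult_right_mono) auto

lemma prime_power_mult_mono:
  fixes x :: real
  assumes "prime p" and "s \<le> t" and "0 \<le> x"
  shows "ereal (real (p ^ s) * x) \<le> ereal (real (p ^ t) * x)"
proof -
  have "p ^ s \<le> p ^ t"
    using assms(1,2) prime_gt_0_nat[of p] by (intro power_increasing) auto
  then have "real (p ^ s) \<le> real (p ^ t)"
    by (simp only: of_nat_le_iff)
  with assms(3) show ?thesis
    by (simp only: ereal_less_eq mult_right_mono)
qed

lemma itilde_nonneg: "0 \<le> itilde p n a t"
  unfolding itilde_def by (rule INF_greatest) simp

lemma itilde_le: "multiplicity p (h + n) \<le> t \<Longrightarrow> a h \<noteq> 0 \<Longrightarrow> itilde p n a t \<le> ereal (real h)"
  unfolding itilde_def by (rule INF_lower) simp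

lemma itilde_attained:
  assumes "itilde p n a t \<noteq> \<infinity>"
  obtains h where "multiplicity p (h + n) \<le> t" and "a h \<noteq> 0" and "itilde p n a t = ereal (real h)"
proof -
  define S where "S = {h. multiplicity p (h + n) \<le> t \<and> a h \<noteq> 0}"
  have "S \<noteq> {}"
    using assms unfolding itilde_def S_def[symmetric] by (auto simp: top_ereal_def)
  then have "(LEAST h. h \<in> S) \<in> S"
    by (auto intro: LeastI)
  moreover have "itilde p n a t = ereal (real (LEAST h. h \<in> S))"
    unfolding itilde_def S_def[symmetric]
    by (rule antisym, rule INF_lower[OF calculation], rule INF_greatest) (simp add: Least_le)
  ultimately show ?thesis
    using that unfolding S_def by blast
qed

lemma insep_index_top: "insep_index p n a vLp (multiplicity p n) = 0"
  by (simp add: insep_index_def)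

lemma insep_index_step:
  assumes "j < multiplicity p n"
  shows "insep_index p n a vLp j = min (itilde p n a j) (insep_index p n a vLp (Suc j) + vLp)"
proof -
  have "multiplicity p n - j = Suc (multiplicity p n - Suc j)"
    using assms by simp
  then show ?thesis
    using assms by (simp add: insep_index_def)
qed

lemma insep_index_le_itilde:
  assumes "0 \<le> vLp" and "j \<le> t" and "t \<le> multiplicity p n"
  shows "insep_index p n a vLp j \<le> itilde p n a t + ereal (real (t - j)) * vLp"
  using assms(2)
proof (induction j rule: inc_induct)
  case base
  show ?case
  proof (cases "t = multiplicity p n")
    case True
    then show ?thesis by (simp add: insep_index_top itilde_nonneg)
  next
    case False
    with assms(3) show ?thesis by (simp add: insep_index_step)
  qed
next
  case (step j)
  have "insep_index p n a vLp j \<le> insep_index p n a vLp (Suc j) + vLp"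
    using step.hyps assms(3) by (simp add: insep_index_step)
  also have "\<dots> \<le> itilde p n a t + ereal (real (t - Suc j)) * vLp + vLp"
    using step.IH by (rule add_right_mono)
  also have "\<dots> = itilde p n a t + ereal (real (t - j)) * vLp"
    using step.hyps ereal_of_nat_Suc_mult[OF assms(1), of "t - Suc j"]
    by (simp add: Suc_diff_Suc add.assoc)
  finally show ?case .
qed

lemma insep_index_attained:
  assumes "0 \<le> vLp" and "a 0 \<noteq> 0" and "j \<le> multiplicity p n"
  shows "insep_index p n a vLp j = \<infinity> \<or>
    (\<exists>h d. a h \<noteq> 0 \<and> multiplicity p (h + n) \<le> j + d \<and>
       ereal (real h) + ereal (real d) * vLp \<le> insep_index p n a vLp j)"
  using assms(3)
proof (induction j rule: inc_induct)
  case base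
  show ?case
    using assms(2) by (intro disjI2 exI[of _ 0]) (simp add: insep_index_top)
next
  case (step j)
  show ?case
  proof (cases "itilde p n a j \<le> insep_index p n a vLp (Suc j) + vLp")
    case True
    then have eq: "insep_index p n a vLp j = itilde p n a j"
      using step.hyps by (simp add: insep_index_step)
    show ?thesis
    proof (cases "itilde p n a j = \<infinity>")
      case False
      then obtain h where "multiplicity p (h + n) \<le> j" "a h \<noteq> 0" "itilde p n a j = ereal (real h)"
        by (rule itilde_attained)
      then show ?thesis
        using eq by (intro disjI2 exI[of _ h] exI[of _ 0]) simp
    qed (simp add: eq)
  next
    case False
    then have eq: "insep_index p n a vLp j = insep_index p n a vLp (Suc j) + vLp"
      using step.hyps by (simp add: insep_index_step)
    from step.IH show ?thesis
    proof
      assume "insep_index p n a vLp (Suc j) = \<infinity>"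
      then show ?thesis
        using eq assms(1) by simp
    next
      assume "\<exists>h d. a h \<noteq> 0 \<and> multiplicity p (h + n) \<le> Suc j + d \<and>
        ereal (real h) + ereal (real d) * vLp \<le> insep_index p n a vLp (Suc j)"
      then obtain h d where hd: "a h \<noteq> 0" "multiplicity p (h + n) \<le> Suc j + d"
        "ereal (real h) + ereal (real d) * vLp \<le> insep_index p n a vLp (Suc j)"
        by blast
      have "ereal (real h) + ereal (real (Suc d)) * vLp = ereal (real h) + ereal (real d) * vLp + vLp"
        using ereal_of_nat_Suc_mult[OF assms(1), of d] by (simp add: add.assoc)
      also have "\<dots> \<le> insep_index p n a vLp j"
        using hd(3) eq by (simp add: add_right_mono)
      finally show ?thesis
        using hd(1,2) by (intro disjI2 exI[of _ h] exI[of _ "Suc d"]) simp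
    qed
  qed
qed

lemma insep_index_le_term:
  assumes "0 \<le> vLp" and "a 0 \<noteq> 0" and "j \<le> multiplicity p n" and "a h \<noteq> 0"
  shows "insep_index p n a vLp j \<le> ereal (real h) + ereal (real (multiplicity p (h + n) - j)) * vLp"
proof -
  define s where "s = multiplicity p (h + n)"
  \<comment> \<open>if \<open>s > \<nu>\<close>, the coefficient \<open>a 0\<close> with \<open>v\<^sub>p(n) = \<nu>\<close> does the job\<close>
  define t where "t = max j (min s (multiplicity p n))"
  have "itilde p n a t \<le> ereal (real h)"
  proof (cases "s \<le> multiplicity p n")
    case True
    then show ?thesis
      using assms(4) by (intro itilde_le) (auto simp: s_def t_def)
  next
    case False
    then have "itilde p n a t \<le> ereal (real 0)"
      using assms(2,3) by (intro itilde_le) (auto simp: t_def)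
    then show ?thesis
      by (simp add: order_trans)
  qed
  moreover have "ereal (real (t - j)) * vLp \<le> ereal (real (s - j)) * vLp"
    using assms(1) by (rule ereal_of_nat_mult_mono) (simp add: t_def)
  moreover have "insep_index p n a vLp j \<le> itilde p n a t + ereal (real (t - j)) * vLp"
    using assms(3) by (intro insep_index_le_itilde[OF assms(1)]) (auto simp: t_def)
  ultimately show ?thesis
    unfolding s_def by (meson add_mono order_trans)
qed

lemma phi_j_le:
  "j0 \<le> j \<Longrightarrow> phi_j p n a vLp j x \<le> insep_index p n a vLp j0 + ereal (real (p ^ j0) * x)"
  unfolding phi_j_def by (rule Min_le) auto

lemma phi_j_attained:
  obtains j0 where "j0 \<le> j" and "phi_j p n a vLp j x = insep_index p n a vLp j0 + ereal (real (p ^ j0) * x)"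
proof -
  have "phi_j p n a vLp j x \<in> (\<lambda>j0. insep_index p n a vLp j0 + ereal (real (p ^ j0) * x)) ` {..j}"
    unfolding phi_j_def by (rule Min_in) auto
  then show ?thesis
    using that by auto
qed

definition phi_term :: "nat \<Rightarrow> nat \<Rightarrow> ereal \<Rightarrow> real \<Rightarrow> nat \<times> nat \<Rightarrow> ereal" where
  "phi_term p n vLp x jh = ereal (real (snd jh)) + vL_nat p vLp ((snd jh + n) choose (p ^ fst jh))
     + ereal (real (p ^ fst jh) * x)"

lemma phi_j_le_phi_term:
  assumes "prime p" and "0 < n" and "0 \<le> vLp" and "a 0 \<noteq> 0" and "j \<le> multiplicity p n"
    and "0 \<le> x" and "j0 \<le> j" and "a h \<noteq> 0"
  shows "phi_j p n a vLp j x \<le> phi_term p n vLp x (j0, h)"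
proof -
  define s where "s = multiplicity p (h + n)"
  define j1 where "j1 = min s j0"
  have "phi_j p n a vLp j x \<le> insep_index p n a vLp j1 + ereal (real (p ^ j1) * x)"
    using assms(7) by (intro phi_j_le) (simp add: j1_def)
  also have "\<dots> \<le> ereal (real h) + ereal (real (s - j0)) * vLp + ereal (real (p ^ j0) * x)"
  proof (rule add_mono)
    have "s - j1 = s - j0"
      by (simp add: j1_def)
    then show "insep_index p n a vLp j1 \<le> ereal (real h) + ereal (real (s - j0)) * vLp"
      using insep_index_le_term[where p=p and n=n and a=a and j=j1, OF assms(3,4) _ assms(8)] assms(5,7)
      by (simp add: j1_def s_def)
    show "ereal (real (p ^ j1) * x) \<le> ereal (real (p ^ j0) * x)"
      by (rule prime_power_mult_mono[OF assms(1) _ assms(6)]) (simp add: j1_def)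
  qed
  also have "\<dots> \<le> phi_term p n vLp x (j0, h)"
    unfolding phi_term_def s_def using assms
    by (simp add: add_left_mono add_right_mono vL_nat_choose_prime_power_ge)
  finally show ?thesis .
qed

lemma INF_phi_term_le_insep_index:
  assumes "prime p" and "0 < n" and "0 \<le> vLp" and "a 0 \<noteq> 0" and "j \<le> multiplicity p n"
    and "0 \<le> x" and "j0 \<le> j"
  shows "(INF jh \<in> {(j0, h). j0 \<le> j \<and> a h \<noteq> 0}. phi_term p n vLp x jh)
    \<le> insep_index p n a vLp j0 + ereal (real (p ^ j0) * x)"
proof -
  have "j0 \<le> multiplicity p n"
    using assms(5,7) by simp
  from insep_index_attained[where p=p and n=n and a=a, OF assms(3,4) this]
  show ?thesis
  proof (elim disjE exE conjE)
    fix h d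
    assume h: "a h \<noteq> 0" and s: "multiplicity p (h + n) \<le> j0 + d"
      and hd: "ereal (real h) + ereal (real d) * vLp \<le> insep_index p n a vLp j0"
    define j1 where "j1 = min (multiplicity p (h + n)) j0"
    have "(INF jh \<in> {(j0, h). j0 \<le> j \<and> a h \<noteq> 0}. phi_term p n vLp x jh) \<le> phi_term p n vLp x (j1, h)"
      using h assms(7) by (intro INF_lower) (auto simp: j1_def)
    also have "\<dots> = ereal (real h) + ereal (real (multiplicity p (h + n) - j0)) * vLp
        + ereal (real (p ^ j1) * x)"
    proof -
      have "multiplicity p (h + n) - j1 = multiplicity p (h + n) - j0"
        by (simp add: j1_def)
      moreover have "vL_nat p vLp ((h + n) choose p ^ j1) = ereal (real (multiplicity p (h + n) - j1)) * vLp"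
        using assms(1,2) by (intro vL_nat_choose_prime_power) (auto simp: j1_def)
      ultimately show ?thesis
        unfolding phi_term_def by simp
    qed
    also have "\<dots> \<le> insep_index p n a vLp j0 + ereal (real (p ^ j0) * x)"
    proof (rule add_mono)
      have "ereal (real (multiplicity p (h + n) - j0)) * vLp \<le> ereal (real d) * vLp"
        using s by (intro ereal_of_nat_mult_mono[OF assms(3)]) simp
      then show "ereal (real h) + ereal (real (multiplicity p (h + n) - j0)) * vLp
          \<le> insep_index p n a vLp j0"
        using hd by (meson add_left_mono order_trans)
      show "ereal (real (p ^ j1) * x) \<le> ereal (real (p ^ j0) * x)"
        by (rule prime_power_mult_mono[OF assms(1) _ assms(6)]) (simp add: j1_def)
    qed
    finally show ?thesis .
  qed simp
qed

theorem proposition2p2: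
  fixes p n j :: nat and a :: "nat \<Rightarrow> 'a::zero" and vLp :: ereal and x :: real
  assumes "prime p"
    and "n > 1"
    and "a 0 \<noteq> 0"
    and "vLp = \<infinity> \<or> (\<exists>e::nat. e \<ge> 1 \<and> vLp = ereal (real (n * e)))"
    and "j \<le> multiplicity p n"
    and "x \<ge> 0"
  shows "phi_j p n a vLp j x =
    (INF jh \<in> {(j0, h). j0 \<le> j \<and> a h \<noteq> 0}.
        ereal (real (snd jh)) + vL_nat p vLp ((snd jh + n) choose (p ^ fst jh))
        + ereal (real (p ^ fst jh) * x))"
proof -
  have n: "0 < n" and vLp: "0 \<le> vLp"
    using assms(2,4) by auto
  show ?thesis
    unfolding phi_term_def[symmetric]
  proof (rule antisym)
    show "phi_j p n a vLp j x \<le> (INF jh \<in> {(j0, h). j0 \<le> j \<and> a h \<noteq> 0}. phi_term p n vLp x jh)"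
      using assms(1,3,5,6) n vLp by (auto intro!: INF_greatest phi_j_le_phi_term)
    obtain j0 where "j0 \<le> j"
      and "phi_j p n a vLp j x = insep_index p n a vLp j0 + ereal (real (p ^ j0) * x)"
      by (rule phi_j_attained)
    then show "(INF jh \<in> {(j0, h). j0 \<le> j \<and> a h \<noteq> 0}. phi_term p n vLp x jh) \<le> phi_j p n a vLp j x"
      using INF_phi_term_le_insep_index[where a=a and j=j and j0=j0, OF assms(1) n vLp assms(3,5,6)] by simp
  qed
qed

end
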